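(* Let $(A,L',L'')$ be an almost twilled Lie-Rinehart algebra with $L'$ and $L''$ finitely generated and projective as $A$-modules. Then $(A,L',L'')$ is a twilled Lie-Rinehart algebra if and only if $(A,L,D)=(A,L'\ltimes(L'')^*,L''\ltimes(L')^* )$ is a Lie-Rinehart bialgebra.
   Context: $R$ commutative ring (with $2,3$ invertible), $A$ commutative $R$-algebra. Lie-Rinehart algebra $(A,L)$: $R$-Lie algebra and $A$-module with Lie morphism $L\to\mathrm{Der}_R(A)$ satisfying $(a\alpha)(b)=a\,\alpha(b)$, $[\alpha,a\beta]=\alpha(a)\beta+a[\alpha,\beta]$. Left $(A,L)$-module: $A$-module with left $L$-module structure, $(a\alpha)\cdot m=a(\alpha\cdot m)$, $\alpha\cdot(am)=\alpha(a)m+a(\alpha\cdot m)$. Almost twilled Lie-Rinehart algebra $(A,L',L'')$: Lie-Rinehart algebras $(A,L')$, $(A,L'')$ (brackets $[\cdot,\cdot]',[\cdot,\cdot]''$), a left $(A,L')$-module structure $x\cdot\xi$ on $L''$, a left $(A,L'')$-module structure $\xi\cdot x$ on $L'$; twilled if $L'\oplus L''$ with bracket $[(x,\xi),(y,\eta)]=([x,y]'+\xi\cdot y-\eta\cdot x,[\xi,\eta]''+x\cdot\eta-y\cdot\xi)$ and action $(x,\xi)(a)=x(a)+\xi(a)$ is a Lie-Rinehart algebra. $(L'')^*=\mathrm{Hom}_A(L'',A)$ is a left $(A,L')$-module via $(x\cdot\phi)(\xi)=x(\phi(\xi))-\phi(x\cdot\xi)$; $L'\ltimes(L'')^*$ is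 $L'\oplus(L'')^*$ with bracket $[(x,\phi),(y,\psi)]=([x,y]',x\cdot\psi-y\cdot\phi)$ and action $(x,\phi)(a)=x(a)$; $L''\ltimes(L')^*$ analogously. Lie-Rinehart bialgebra: $(A,L,D)$ with $L,D$ finitely generated projective $(R,A)$-Lie algebras, $D\cong\mathrm{Hom}_A(L,A)$, such that $d_*[x,y]=[d_*x,y]+[x,d_*y]$ for $x,y\in L$, where $d_*$ is the Lie-Rinehart differential on $\mathrm{Alt}_A(D,A)\cong\Lambda_AL$ (formula $(df)(\alpha_1,..,\alpha_n)=(-1)^n[\sum_i(-1)^{i-1}\alpha_i(f(..\widehat{\alpha_i}..))+\sum_{j<k}(-1)^{j+k}f([\alpha_j,\alpha_k],..)]$ for $D$) and $[\cdot,\cdot]$ the Gerstenhaber bracket on $\Lambda_AL$ induced by the Lie-Rinehart structure of $L$. *)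

theory Defs
  imports Main
begin

record ('a,'m) amod =
  mcarrier :: "'m set"
  madd :: "'m \<Rightarrow> 'm \<Rightarrow> 'm"
  mzero :: "'m"
  msmult :: "'a \<Rightarrow> 'm \<Rightarrow> 'm"

definition msub :: "('a::comm_ring_1,'m,'z) amod_scheme \<Rightarrow> 'm \<Rightarrow> 'm \<Rightarrow> 'm" where
  "msub M x y = madd M x (msmult M (-1) y)"

definition amodule :: "('a::comm_ring_1,'m,'z) amod_scheme \<Rightarrow> bool" where
  "amodule M \<longleftrightarrow>
     mzero M \<in> mcarrier M \<and>
     (\<forall>x\<in>mcarrier M. \<forall>y\<in>mcarrier M. madd M x y \<in> mcarrier M) \<and>
     (\<forall>a. \<forall>x\<in>mcarrier M. msmult M a x \<in> mcarrier M) \<and>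
     (\<forall>x\<in>mcarrier M. \<forall>y\<in>mcarrier M. \<forall>z\<in>mcarrier M.
        madd M (madd M x y) z = madd M x (madd M y z)) \<and>
     (\<forall>x\<in>mcarrier M. \<forall>y\<in>mcarrier M. madd M x y = madd M y x) \<and>
     (\<forall>x\<in>mcarrier M. madd M (mzero M) x = x) \<and>
     (\<forall>x\<in>mcarrier M. \<exists>y\<in>mcarrier M. madd M x y = mzero M) \<and>
     (\<forall>a. \<forall>x\<in>mcarrier M. \<forall>y\<in>mcarrier M.
        msmult M a (madd M x y) = madd M (msmult M a x) (msmult M a y)) \<and>
     (\<forall>a b. \<forall>x\<in>mcarrier M. msmult M (a + b) x = madd M (msmult M a x) (msmult M b x)) \<and>
     (\<forall>a b. \<forall>x\<in>mcarrier M. msmult M (a * b) x = msmult M a (msmult M b x)) \<and>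
     (\<forall>x\<in>mcarrier M. msmult M 1 x = x)"

definition alin :: "('a::comm_ring_1,'m,'z) amod_scheme \<Rightarrow> ('a,'n,'w) amod_scheme \<Rightarrow> ('m \<Rightarrow> 'n) \<Rightarrow> bool" where
  "alin M N f \<longleftrightarrow>
     (\<forall>x\<in>mcarrier M. f x \<in> mcarrier N) \<and>
     (\<forall>x\<in>mcarrier M. \<forall>y\<in>mcarrier M. f (madd M x y) = madd N (f x) (f y)) \<and>
     (\<forall>a. \<forall>x\<in>mcarrier M. f (msmult M a x) = msmult N a (f x))"

definition selfmod :: "('a::comm_ring_1,'a) amod" where
  "selfmod = \<lparr>mcarrier = UNIV, madd = (+), mzero = 0, msmult = (*)\<rparr>"

text \<open>The free module A^n, realised as sequences vanishing from index n on.\<close>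
definition freemod :: "nat \<Rightarrow> ('a::comm_ring_1, nat \<Rightarrow> 'a) amod" where
  "freemod n = \<lparr>mcarrier = {v. \<forall>k\<ge>n. v k = 0},
                madd = (\<lambda>v w k. v k + w k), mzero = (\<lambda>k. 0),
                msmult = (\<lambda>a v k. a * v k)\<rparr>"

text \<open>Finitely generated projective = direct summand (retract) of a finitely generated free module.\<close>
definition fgp :: "('a::comm_ring_1,'m,'z) amod_scheme \<Rightarrow> bool" where
  "fgp M \<longleftrightarrow> amodule M \<and>
     (\<exists>n i p. alin M (freemod n) i \<and> alin (freemod n) M p \<and> (\<forall>x\<in>mcarrier M. p (i x) = x))"

text \<open>The dual module Hom_A(M,A); functions are extensional (zero outside the carrier).\<close>
definition dualmod :: "('a::comm_ring_1,'m,'z) amod_scheme \<Rightarrow> ('a, 'm \<Rightarrow> 'a) amod" where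
  "dualmod M = \<lparr>mcarrier = {\<phi>. alin M selfmod \<phi> \<and> (\<forall>x. x \<notin> mcarrier M \<longrightarrow> \<phi> x = 0)},
                madd = (\<lambda>\<phi> \<psi> x. \<phi> x + \<psi> x), mzero = (\<lambda>x. 0),
                msmult = (\<lambda>a \<phi> x. a * \<phi> x)\<rparr>"

definition alg_map :: "('r::comm_ring_1 \<Rightarrow> 'a::comm_ring_1) \<Rightarrow> bool" where
  "alg_map \<iota> \<longleftrightarrow> \<iota> 1 = 1 \<and> (\<forall>r s. \<iota> (r + s) = \<iota> r + \<iota> s) \<and> (\<forall>r s. \<iota> (r * s) = \<iota> r * \<iota> s)"

definition is_der :: "('r::comm_ring_1 \<Rightarrow> 'a::comm_ring_1) \<Rightarrow> ('a \<Rightarrow> 'a) \<Rightarrow> bool" where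
  "is_der \<iota> d \<longleftrightarrow> (\<forall>x y. d (x + y) = d x + d y) \<and> (\<forall>r x. d (\<iota> r * x) = \<iota> r * d x) \<and>
                   (\<forall>x y. d (x * y) = x * d y + y * d x)"

record ('a,'m) lr = "('a,'m) amod" +
  lbr :: "'m \<Rightarrow> 'm \<Rightarrow> 'm"
  anc :: "'m \<Rightarrow> 'a \<Rightarrow> 'a"

definition lr_alg :: "('r::comm_ring_1 \<Rightarrow> 'a::comm_ring_1) \<Rightarrow> ('a,'m,'z) lr_scheme \<Rightarrow> bool" where
  "lr_alg \<iota> L \<longleftrightarrow> amodule L \<and>
     (\<forall>x\<in>mcarrier L. \<forall>y\<in>mcarrier L. lbr L x y \<in> mcarrier L) \<and>
     (\<forall>x\<in>mcarrier L. \<forall>y\<in>mcarrier L. \<forall>z\<in>mcarrier L.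
        lbr L (madd L x y) z = madd L (lbr L x z) (lbr L y z) \<and>
        lbr L z (madd L x y) = madd L (lbr L z x) (lbr L z y)) \<and>
     (\<forall>r. \<forall>x\<in>mcarrier L. \<forall>y\<in>mcarrier L.
        lbr L (msmult L (\<iota> r) x) y = msmult L (\<iota> r) (lbr L x y) \<and>
        lbr L x (msmult L (\<iota> r) y) = msmult L (\<iota> r) (lbr L x y)) \<and>
     (\<forall>x\<in>mcarrier L. lbr L x x = mzero L) \<and>
     (\<forall>x\<in>mcarrier L. \<forall>y\<in>mcarrier L. \<forall>z\<in>mcarrier L.
        madd L (madd L (lbr L x (lbr L y z)) (lbr L y (lbr L z x))) (lbr L z (lbr L x y)) = mzero L) \<and>
     (\<forall>x\<in>mcarrier L. is_der \<iota> (anc L x)) \<and>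
     (\<forall>x\<in>mcarrier L. \<forall>y\<in>mcarrier L. \<forall>b. anc L (madd L x y) b = anc L x b + anc L y b) \<and>
     (\<forall>a. \<forall>x\<in>mcarrier L. \<forall>b. anc L (msmult L a x) b = a * anc L x b) \<and>
     (\<forall>x\<in>mcarrier L. \<forall>y\<in>mcarrier L. \<forall>b.
        anc L (lbr L x y) b = anc L x (anc L y b) - anc L y (anc L x b)) \<and>
     (\<forall>a. \<forall>x\<in>mcarrier L. \<forall>y\<in>mcarrier L.
        lbr L x (msmult L a y) = madd L (msmult L (anc L x a) y) (msmult L a (lbr L x y)))"

definition lr_module :: "('a::comm_ring_1,'m,'z) lr_scheme \<Rightarrow> ('a,'n,'w) amod_scheme \<Rightarrow> ('m \<Rightarrow> 'n \<Rightarrow> 'n) \<Rightarrow> bool" where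
  "lr_module L M act \<longleftrightarrow> amodule M \<and>
     (\<forall>x\<in>mcarrier L. \<forall>m\<in>mcarrier M. act x m \<in> mcarrier M) \<and>
     (\<forall>x\<in>mcarrier L. \<forall>y\<in>mcarrier L. \<forall>m\<in>mcarrier M. act (madd L x y) m = madd M (act x m) (act y m)) \<and>
     (\<forall>x\<in>mcarrier L. \<forall>m\<in>mcarrier M. \<forall>n\<in>mcarrier M. act x (madd M m n) = madd M (act x m) (act x n)) \<and>
     (\<forall>x\<in>mcarrier L. \<forall>y\<in>mcarrier L. \<forall>m\<in>mcarrier M.
        act (lbr L x y) m = msub M (act x (act y m)) (act y (act x m))) \<and>
     (\<forall>a. \<forall>x\<in>mcarrier L. \<forall>m\<in>mcarrier M. act (msmult L a x) m = msmult M a (act x m)) \<and>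
     (\<forall>a. \<forall>x\<in>mcarrier L. \<forall>m\<in>mcarrier M.
        act x (msmult M a m) = madd M (msmult M (anc L x a) m) (msmult M a (act x m)))"

definition almost_twilled ::
  "('r::comm_ring_1 \<Rightarrow> 'a::comm_ring_1) \<Rightarrow> ('a,'l1) lr \<Rightarrow> ('a,'l2) lr \<Rightarrow>
   ('l1 \<Rightarrow> 'l2 \<Rightarrow> 'l2) \<Rightarrow> ('l2 \<Rightarrow> 'l1 \<Rightarrow> 'l1) \<Rightarrow> bool" where
  "almost_twilled \<iota> L1 L2 act12 act21 \<longleftrightarrow>
     lr_alg \<iota> L1 \<and> lr_alg \<iota> L2 \<and> lr_module L1 L2 act12 \<and> lr_module L2 L1 act21"

definition twsum ::
  "('a::comm_ring_1,'l1) lr \<Rightarrow> ('a,'l2) lr \<Rightarrow> ('l1 \<Rightarrow> 'l2 \<Rightarrow> 'l2) \<Rightarrow> ('l2 \<Rightarrow> 'l1 \<Rightarrow> 'l1) \<Rightarrow> ('a, 'l1 \<times> 'l2) lr" where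
  "twsum L1 L2 act12 act21 = \<lparr>
     mcarrier = mcarrier L1 \<times> mcarrier L2,
     madd = (\<lambda>(x,\<xi>) (y,\<eta>). (madd L1 x y, madd L2 \<xi> \<eta>)),
     mzero = (mzero L1, mzero L2),
     msmult = (\<lambda>a (x,\<xi>). (msmult L1 a x, msmult L2 a \<xi>)),
     lbr = (\<lambda>(x,\<xi>) (y,\<eta>).
        (msub L1 (madd L1 (lbr L1 x y) (act21 \<xi> y)) (act21 \<eta> x),
         msub L2 (madd L2 (lbr L2 \<xi> \<eta>) (act12 x \<eta>)) (act12 y \<xi>))),
     anc = (\<lambda>(x,\<xi>) a. anc L1 x a + anc L2 \<xi> a)\<rparr>"

definition twilled ::
  "('r::comm_ring_1 \<Rightarrow> 'a::comm_ring_1) \<Rightarrow> ('a,'l1) lr \<Rightarrow> ('a,'l2) lr \<Rightarrow>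
   ('l1 \<Rightarrow> 'l2 \<Rightarrow> 'l2) \<Rightarrow> ('l2 \<Rightarrow> 'l1 \<Rightarrow> 'l1) \<Rightarrow> bool" where
  "twilled \<iota> L1 L2 act12 act21 \<longleftrightarrow>
     almost_twilled \<iota> L1 L2 act12 act21 \<and> lr_alg \<iota> (twsum L1 L2 act12 act21)"

definition coact :: "('a::comm_ring_1,'l1) lr \<Rightarrow> ('a,'l2) lr \<Rightarrow> ('l1 \<Rightarrow> 'l2 \<Rightarrow> 'l2) \<Rightarrow>
                     'l1 \<Rightarrow> ('l2 \<Rightarrow> 'a) \<Rightarrow> ('l2 \<Rightarrow> 'a)" where
  "coact L1 L2 act x \<phi> = (\<lambda>\<xi>. if \<xi> \<in> mcarrier L2 then anc L1 x (\<phi> \<xi>) - \<phi> (act x \<xi>) else 0)"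

definition semid :: "('a::comm_ring_1,'l1) lr \<Rightarrow> ('a,'l2) lr \<Rightarrow> ('l1 \<Rightarrow> 'l2 \<Rightarrow> 'l2) \<Rightarrow>
                     ('a, 'l1 \<times> ('l2 \<Rightarrow> 'a)) lr" where
  "semid L1 L2 act = \<lparr>
     mcarrier = mcarrier L1 \<times> mcarrier (dualmod L2),
     madd = (\<lambda>(x,\<phi>) (y,\<psi>). (madd L1 x y, (\<lambda>\<xi>. \<phi> \<xi> + \<psi> \<xi>))),
     mzero = (mzero L1, (\<lambda>\<xi>. 0)),
     msmult = (\<lambda>a (x,\<phi>). (msmult L1 a x, (\<lambda>\<xi>. a * \<phi> \<xi>))),
     lbr = (\<lambda>(x,\<phi>) (y,\<psi>). (lbr L1 x y,
              (\<lambda>\<xi>. coact L1 L2 act x \<psi> \<xi> - coact L1 L2 act y \<phi> \<xi>))),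
     anc = (\<lambda>(x,\<phi>) a. anc L1 x a)\<rparr>"

definition natpair :: "('l2 \<times> ('l1 \<Rightarrow> 'a::comm_ring_1)) \<Rightarrow> ('l1 \<times> ('l2 \<Rightarrow> 'a)) \<Rightarrow> 'a" where
  "natpair = (\<lambda>(\<xi>,\<psi>) (x,\<phi>). \<phi> \<xi> + \<psi> x)"

text \<open>D is identified with Hom_A(L,A) via the pairing; Alt_A(D,A) \<cong> \<Lambda>_A L, so x \<in> L is the
  1-form \<alpha> \<mapsto> pair \<alpha> x, and 2-forms are functions of two arguments in D.\<close>

definition dstar :: "('a::comm_ring_1,'d) lr \<Rightarrow> ('d \<Rightarrow> 'l \<Rightarrow> 'a) \<Rightarrow> 'l \<Rightarrow> 'd \<Rightarrow> 'd \<Rightarrow> 'a" where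
  "dstar D pair x \<alpha> \<beta> = anc D \<alpha> (pair \<beta> x) - anc D \<beta> (pair \<alpha> x) - pair (lbr D \<alpha> \<beta>) x"

definition coad :: "('a::comm_ring_1,'l) lr \<Rightarrow> ('a,'d) lr \<Rightarrow> ('d \<Rightarrow> 'l \<Rightarrow> 'a) \<Rightarrow> 'l \<Rightarrow> 'd \<Rightarrow> 'd" where
  "coad L D pair x \<alpha> = (THE \<gamma>. \<gamma> \<in> mcarrier D \<and>
      (\<forall>z\<in>mcarrier L. pair \<gamma> z = anc L x (pair \<alpha> z) - pair \<alpha> (lbr L x z)))"

text \<open>Gerstenhaber bracket [x,\<omega>] of x \<in> L = \<Lambda>^1 L with \<omega> \<in> \<Lambda>^2 L \<cong> Alt^2_A(D,A)
  (the derivation extending [x,-] on L and x(-) on A).\<close>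
definition gbr12 :: "('a::comm_ring_1,'l) lr \<Rightarrow> ('a,'d) lr \<Rightarrow> ('d \<Rightarrow> 'l \<Rightarrow> 'a) \<Rightarrow>
                     'l \<Rightarrow> ('d \<Rightarrow> 'd \<Rightarrow> 'a) \<Rightarrow> 'd \<Rightarrow> 'd \<Rightarrow> 'a" where
  "gbr12 L D pair x \<omega> \<alpha> \<beta> =
     anc L x (\<omega> \<alpha> \<beta>) - \<omega> (coad L D pair x \<alpha>) \<beta> - \<omega> \<alpha> (coad L D pair x \<beta>)"

text \<open>Gerstenhaber bracket [\<omega>,x] = -(-1)^{(2-1)(1-1)}[x,\<omega>] = -[x,\<omega>].\<close>
definition gbr21 :: "('a::comm_ring_1,'l) lr \<Rightarrow> ('a,'d) lr \<Rightarrow> ('d \<Rightarrow> 'l \<Rightarrow> 'a) \<Rightarrow>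
                     ('d \<Rightarrow> 'd \<Rightarrow> 'a) \<Rightarrow> 'l \<Rightarrow> 'd \<Rightarrow> 'd \<Rightarrow> 'a" where
  "gbr21 L D pair \<omega> x \<alpha> \<beta> = - gbr12 L D pair x \<omega> \<alpha> \<beta>"

definition lr_bialgebra :: "('r::comm_ring_1 \<Rightarrow> 'a::comm_ring_1) \<Rightarrow> ('a,'l) lr \<Rightarrow> ('a,'d) lr \<Rightarrow>
                            ('d \<Rightarrow> 'l \<Rightarrow> 'a) \<Rightarrow> bool" where
  "lr_bialgebra \<iota> L D pair \<longleftrightarrow>
     lr_alg \<iota> L \<and> lr_alg \<iota> D \<and> fgp L \<and> fgp D \<and>
     alin D (dualmod L) (\<lambda>\<alpha> z. if z \<in> mcarrier L then pair \<alpha> z else 0) \<and>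
     bij_betw (\<lambda>\<alpha> z. if z \<in> mcarrier L then pair \<alpha> z else 0) (mcarrier D) (mcarrier (dualmod L)) \<and>
     (\<forall>x\<in>mcarrier L. \<forall>y\<in>mcarrier L. \<forall>\<alpha>\<in>mcarrier D. \<forall>\<beta>\<in>mcarrier D.
        dstar D pair (lbr L x y) \<alpha> \<beta> =
          gbr21 L D pair (dstar D pair x) y \<alpha> \<beta> + gbr12 L D pair x (dstar D pair y) \<alpha> \<beta>)"

end

theory Submission
  imports Defs
begin

text \<open>
  Both sides are equivalent to the matched-pair conditions on (L', L''): the two mixed Jacobi
  identities (\<open>matched_defect\<close>) and the compatibility of the anchors with the mixed
  brackets (\<open>anchor_defect\<close>). For the twilled sum these are, beside the Jacobi identities
  of L' and L'', exactly the components of its Jacobiator and of its anchor condition. For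
  the bialgebra, evaluating d_*[X,Y] - [d_*X,Y] - [X,d_*Y] on two elements of
  D = L'' \<ltimes> (L')^* gives an explicit combination of the same defects paired with the
  components of X, Y and of the arguments. Since L' and L'' are finitely generated projective,
  their duals separate points and the pairing identifies D with the dual of L, so this
  combination vanishes identically iff the defects do.
\<close>

lemma selfmod_simps [simp]:
  "mcarrier selfmod = UNIV" "madd selfmod = (+)" "mzero selfmod = 0" "msmult selfmod = (*)"
  by (simp_all add: selfmod_def)

lemma freemod_simps [simp]:
  "mcarrier (freemod n) = {v. \<forall>k\<ge>n. v k = 0}"
  "madd (freemod n) = (\<lambda>v w k. v k + w k)"
  "mzero (freemod n) = (\<lambda>k. 0)"
  "msmult (freemod n) = (\<lambda>a v k. a * v k)"
  by (simp_all add: freemod_def)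

lemma dualmod_simps [simp]:
  "madd (dualmod M) = (\<lambda>\<phi> \<psi> x. \<phi> x + \<psi> x)"
  "mzero (dualmod M) = (\<lambda>x. 0)"
  "msmult (dualmod M) = (\<lambda>a \<phi> x. a * \<phi> x)"
  by (simp_all add: dualmod_def)

lemma mem_dualmod_iff:
  "\<phi> \<in> mcarrier (dualmod M) \<longleftrightarrow> alin M selfmod \<phi> \<and> (\<forall>x. x \<notin> mcarrier M \<longrightarrow> \<phi> x = 0)"
  by (simp add: dualmod_def)

lemma dualmod_add_closed [intro, simp]:
  "\<phi> \<in> mcarrier (dualmod M) \<Longrightarrow> \<psi> \<in> mcarrier (dualmod M) \<Longrightarrow> (\<lambda>x. \<phi> x + \<psi> x) \<in> mcarrier (dualmod M)"
  and dualmod_diff_closed [intro, simp]: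
  "\<phi> \<in> mcarrier (dualmod M) \<Longrightarrow> \<psi> \<in> mcarrier (dualmod M) \<Longrightarrow> (\<lambda>x. \<phi> x - \<psi> x) \<in> mcarrier (dualmod M)"
  and dualmod_smult_closed [intro, simp]:
  "\<phi> \<in> mcarrier (dualmod M) \<Longrightarrow> (\<lambda>x. a * \<phi> x) \<in> mcarrier (dualmod M)"
  and dualmod_zero_closed [intro, simp]: "(\<lambda>x. 0) \<in> mcarrier (dualmod M)"
  by (auto simp: mem_dualmod_iff alin_def algebra_simps)

lemma dualmod_sum_closed:
  "(\<And>k. g k \<in> mcarrier (dualmod M)) \<Longrightarrow>
    (\<lambda>x. \<Sum>k<(N::nat). c k * g k x) \<in> mcarrier (dualmod M)"
  by (induction N) auto

definition unit_vec :: "nat \<Rightarrow> nat \<Rightarrow> 'a::comm_ring_1" where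
  "unit_vec k = (\<lambda>j. if j = k then 1 else 0)"

lemma truncation_in_freemod: "(\<lambda>k. if k < n then v k else 0) \<in> mcarrier (freemod n)"
  by simp

lemma unit_vec_in_freemod: "k < n \<Longrightarrow> unit_vec k \<in> mcarrier (freemod n)"
  by (simp add: unit_vec_def)

lemma freemod_functional_expand:
  fixes G :: "(nat \<Rightarrow> 'a::comm_ring_1) \<Rightarrow> 'a"
  assumes add: "\<And>v w. v \<in> mcarrier (freemod n) \<Longrightarrow> w \<in> mcarrier (freemod n) \<Longrightarrow>
                   G (\<lambda>k. v k + w k) = G v + G w"
    and smult: "\<And>v a. v \<in> mcarrier (freemod n) \<Longrightarrow> G (\<lambda>k. a * v k) = a * G v"
    and v: "v \<in> mcarrier (freemod n)"
  shows "G v = (\<Sum>k<n. v k * G (unit_vec k))"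
proof -
  have "G (\<lambda>j. if j < m then v j else 0) = (\<Sum>k<m. v k * G (unit_vec k))" if "m \<le> n" for m
    using that
  proof (induction m)
    case 0
    have "G (\<lambda>k. 0 * (0::'a)) = 0 * G (\<lambda>k. 0)" by (rule smult) simp
    then show ?case by simp
  next
    case (Suc m)
    have split: "(\<lambda>j. if j < Suc m then v j else 0)
        = (\<lambda>k. (\<lambda>j. if j < m then v j else 0) k + (\<lambda>k. v m * unit_vec m k) k)"
      by (auto simp: unit_vec_def fun_eq_iff less_Suc_eq)
    have "G (\<lambda>k. v m * unit_vec m k) = v m * G (unit_vec m)"
      using Suc.prems by (intro smult unit_vec_in_freemod) simp
    moreover have "G (\<lambda>k. (\<lambda>j. if j < m then v j else 0) k + (\<lambda>k. v m * unit_vec m k) k)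
        = G (\<lambda>j. if j < m then v j else 0) + G (\<lambda>k. v m * unit_vec m k)"
      by (rule add) (use Suc.prems in \<open>auto simp: unit_vec_def\<close>)
    ultimately show ?case using Suc by (simp add: split)
  qed
  moreover have "(\<lambda>j. if j < n then v j else 0) = v" using v by (auto simp: fun_eq_iff)
  ultimately show ?thesis by (metis order_refl)
qed

text \<open>Since p \<circ> i = id, identities in M can be checked on the coordinates i x k \<in> A.\<close>
locale free_retract =
  fixes M :: "('a::comm_ring_1,'m,'z) amod_scheme" and n :: nat
    and i :: "'m \<Rightarrow> nat \<Rightarrow> 'a" and p :: "(nat \<Rightarrow> 'a) \<Rightarrow> 'm"
  assumes amodule: "amodule M"
    and i_alin: "alin M (freemod n) i" and p_alin: "alin (freemod n) M p"
    and p_i: "\<forall>x\<in>mcarrier M. p (i x) = x"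
begin

abbreviation "C \<equiv> mcarrier M"
abbreviation "D \<equiv> mcarrier (dualmod M)"

lemma add_closed [intro, simp]: "x \<in> C \<Longrightarrow> y \<in> C \<Longrightarrow> madd M x y \<in> C"
  and smult_closed [intro, simp]: "x \<in> C \<Longrightarrow> msmult M a x \<in> C"
  and zero_closed [intro, simp]: "mzero M \<in> C"
  using amodule unfolding amodule_def by auto

lemma sub_closed [intro, simp]: "x \<in> C \<Longrightarrow> y \<in> C \<Longrightarrow> msub M x y \<in> C"
  unfolding msub_def by simp

lemma neg_exists: "x \<in> C \<Longrightarrow> \<exists>y\<in>C. madd M x y = mzero M"
  using amodule unfolding amodule_def by blast

lemma coord_vanishes: "x \<in> C \<Longrightarrow> k \<ge> n \<Longrightarrow> i x k = 0"
  and coord_add [simp]: "x \<in> C \<Longrightarrow> y \<in> C \<Longrightarrow> i (madd M x y) k = i x k + i y k"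
  and coord_smult [simp]: "x \<in> C \<Longrightarrow> i (msmult M a x) k = a * i x k"
  using i_alin unfolding alin_def by auto

lemma coords_in_freemod: "x \<in> C \<Longrightarrow> i x \<in> mcarrier (freemod n)"
  using i_alin unfolding alin_def by blast

lemma coord_zero [simp]: "i (mzero M) k = 0"
proof -
  have "madd M (mzero M) (mzero M) = mzero M" using amodule unfolding amodule_def by blast
  then have "i (mzero M) k + i (mzero M) k = i (mzero M) k"
    using coord_add[of "mzero M" "mzero M" k] by simp
  then show ?thesis by simp
qed

lemma coord_sub [simp]: "x \<in> C \<Longrightarrow> y \<in> C \<Longrightarrow> i (msub M x y) k = i x k - i y k"
  unfolding msub_def by simp

lemma coords_eqI: "x \<in> C \<Longrightarrow> y \<in> C \<Longrightarrow> (\<And>k. i x k = i y k) \<Longrightarrow> x = y"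
  using p_i by (metis ext)

lemma smult_zero [simp]: "x \<in> C \<Longrightarrow> msmult M 0 x = mzero M"
  and smult_mzero [simp]: "msmult M a (mzero M) = mzero M"
  and add_mzero_left [simp]: "x \<in> C \<Longrightarrow> madd M (mzero M) x = x"
  and add_mzero_right [simp]: "x \<in> C \<Longrightarrow> madd M x (mzero M) = x"
  by (rule coords_eqI; simp)+

lemma sub_mzero [simp]: "x \<in> C \<Longrightarrow> msub M x (mzero M) = x"
  by (simp add: msub_def)

lemma proj_add: "v \<in> mcarrier (freemod n) \<Longrightarrow> w \<in> mcarrier (freemod n) \<Longrightarrow>
    p (\<lambda>k. v k + w k) = madd M (p v) (p w)"
  and proj_smult: "v \<in> mcarrier (freemod n) \<Longrightarrow> p (\<lambda>k. a * v k) = msmult M a (p v)"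
  and proj_closed: "v \<in> mcarrier (freemod n) \<Longrightarrow> p v \<in> C"
  using p_alin unfolding alin_def by auto

lemma linear_functional_expand:
  assumes add: "\<And>x y. x \<in> C \<Longrightarrow> y \<in> C \<Longrightarrow> G (madd M x y) = G x + G y"
    and smult: "\<And>x a. x \<in> C \<Longrightarrow> G (msmult M a x) = a * G x"
    and x: "x \<in> C"
  shows "G x = (\<Sum>k<n. i x k * G (p (unit_vec k)))"
proof -
  have "G (p (i x)) = (\<Sum>k<n. i x k * G (p (unit_vec k)))"
    by (rule freemod_functional_expand[where G = "G \<circ> p", unfolded comp_def])
      (use x coords_in_freemod[OF x] in \<open>simp_all add: proj_add proj_smult proj_closed add smult\<close>)
  then show ?thesis using p_i x by simp
qed

lemma dual_add [simp]: "\<phi> \<in> D \<Longrightarrow> x \<in> C \<Longrightarrow> y \<in> C \<Longrightarrow> \<phi> (madd M x y) = \<phi> x + \<phi> y"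
  and dual_smult [simp]: "\<phi> \<in> D \<Longrightarrow> x \<in> C \<Longrightarrow> \<phi> (msmult M a x) = a * \<phi> x"
  and dual_outside [simp]: "\<phi> \<in> D \<Longrightarrow> x \<notin> C \<Longrightarrow> \<phi> x = 0"
  by (auto simp: mem_dualmod_iff alin_def)

lemma dual_sub [simp]: "\<phi> \<in> D \<Longrightarrow> x \<in> C \<Longrightarrow> y \<in> C \<Longrightarrow> \<phi> (msub M x y) = \<phi> x - \<phi> y"
  by (simp add: msub_def)

lemma dual_zero [simp]: "\<phi> \<in> D \<Longrightarrow> \<phi> (mzero M) = 0"
  using dual_smult[of \<phi> "mzero M" 0] by simp

lemma dual_expand: "\<phi> \<in> D \<Longrightarrow> x \<in> C \<Longrightarrow> \<phi> x = (\<Sum>k<n. i x k * \<phi> (p (unit_vec k)))"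
  by (rule linear_functional_expand) simp_all

lemma dual_proj_expand:
  "\<phi> \<in> D \<Longrightarrow> v \<in> mcarrier (freemod n) \<Longrightarrow> \<phi> (p v) = (\<Sum>k<n. v k * \<phi> (p (unit_vec k)))"
  by (rule freemod_functional_expand[where G = "\<phi> \<circ> p", unfolded comp_def])
    (simp_all add: proj_add proj_smult proj_closed)

definition coord_functional :: "nat \<Rightarrow> 'm \<Rightarrow> 'a" where
  "coord_functional k = (\<lambda>x. if x \<in> C then i x k else 0)"

lemma coord_functional_in_dual: "coord_functional k \<in> D"
  by (auto simp: coord_functional_def mem_dualmod_iff alin_def)

lemma dual_separates:
  assumes "x \<in> C" "y \<in> C" and "\<And>\<phi>. \<phi> \<in> D \<Longrightarrow> \<phi> x = \<phi> y"
  shows "x = y"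
proof (rule coords_eqI)
  show "i x k = i y k" for k
    using assms(3)[OF coord_functional_in_dual] assms(1,2) by (simp add: coord_functional_def)
qed (use assms in auto)

lemma dual_eqI: "\<phi> \<in> D \<Longrightarrow> \<psi> \<in> D \<Longrightarrow> (\<And>x. x \<in> C \<Longrightarrow> \<phi> x = \<psi> x) \<Longrightarrow> \<phi> = \<psi>"
  by (metis dual_outside ext)

lemma dual_functional_sum:
  assumes add: "\<And>\<phi> \<psi>. \<phi> \<in> D \<Longrightarrow> \<psi> \<in> D \<Longrightarrow> F (\<lambda>x. \<phi> x + \<psi> x) = F \<phi> + F \<psi>"
    and smult: "\<And>\<phi> a. \<phi> \<in> D \<Longrightarrow> F (\<lambda>x. a * \<phi> x) = a * F \<phi>"
    and g: "\<And>k. g k \<in> D"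
  shows "F (\<lambda>x. \<Sum>k<(N::nat). c k * g k x) = (\<Sum>k<N. c k * F (g k))"
proof (induction N)
  case 0
  have "F (\<lambda>x. 0 * 0) = 0 * F (\<lambda>x. 0)" by (rule smult) simp
  then show ?case by simp
next
  case (Suc N)
  have "F (\<lambda>x. (\<Sum>k<N. c k * g k x) + c N * g N x) = F (\<lambda>x. \<Sum>k<N. c k * g k x) + c N * F (g N)"
    using add[of "\<lambda>x. \<Sum>k<N. c k * g k x" "\<lambda>x. c N * g N x"] smult[OF g]
      dualmod_sum_closed[of g M c N] g
    by simp
  then show ?case using Suc by simp
qed

lemma dual_functional_is_evaluation:
  assumes add: "\<And>\<phi> \<psi>. \<phi> \<in> D \<Longrightarrow> \<psi> \<in> D \<Longrightarrow> F (\<lambda>x. \<phi> x + \<psi> x) = F \<phi> + F \<psi>"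
    and smult: "\<And>\<phi> a. \<phi> \<in> D \<Longrightarrow> F (\<lambda>x. a * \<phi> x) = a * F \<phi>"
  obtains \<xi> where "\<xi> \<in> C" and "\<And>\<phi>. \<phi> \<in> D \<Longrightarrow> F \<phi> = \<phi> \<xi>"
proof -
  define v where "v = (\<lambda>k. if k < n then F (coord_functional k) else 0)"
  have v: "v \<in> mcarrier (freemod n)" by (simp add: v_def)
  have "F \<phi> = \<phi> (p v)" if \<phi>: "\<phi> \<in> D" for \<phi>
  proof -
    have expand: "(\<lambda>x. \<Sum>k<n. \<phi> (p (unit_vec k)) * coord_functional k x) = \<phi>"
    proof
      fix x
      show "(\<Sum>k<n. \<phi> (p (unit_vec k)) * coord_functional k x) = \<phi> x"
        using dual_expand[OF \<phi>, of x] \<phi>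
        by (cases "x \<in> C") (simp_all add: coord_functional_def mult.commute)
    qed
    have "F \<phi> = F (\<lambda>x. \<Sum>k<n. \<phi> (p (unit_vec k)) * coord_functional k x)"
      by (simp only: expand)
    also have "\<dots> = (\<Sum>k<n. \<phi> (p (unit_vec k)) * F (coord_functional k))"
      by (rule dual_functional_sum[OF add smult coord_functional_in_dual])
    also have "\<dots> = (\<Sum>k<n. v k * \<phi> (p (unit_vec k)))"
      by (rule sum.cong) (simp_all add: v_def)
    also have "\<dots> = \<phi> (p v)"
      by (rule dual_proj_expand[OF \<phi> v, symmetric])
    finally show ?thesis .
  qed
  then show ?thesis using that proj_closed[OF v] by blast
qed

text \<open>Expand G in the generators p (unit_vec k); each coefficient G (p (unit_vec k)) kills x,
  hence its coordinates.\<close>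
lemma annihilating_functional_zero:
  assumes add: "\<And>x y. x \<in> C \<Longrightarrow> y \<in> C \<Longrightarrow> G (madd M x y) = G x + G y"
    and smult: "\<And>x a. x \<in> C \<Longrightarrow> G (msmult M a x) = a * G x"
    and annihilates: "\<And>x y. x \<in> C \<Longrightarrow> y \<in> C \<Longrightarrow> msmult M (G y) x = mzero M"
    and x: "x \<in> C"
  shows "G x = 0"
proof -
  have "i x k * G (p (unit_vec k)) = 0" if "k < n" for k
  proof -
    have "i (msmult M (G (p (unit_vec k))) x) k = 0"
      using annihilates[OF x proj_closed[OF unit_vec_in_freemod[OF that]]] by simp
    then show ?thesis using x by (simp add: mult.commute)
  qed
  then show ?thesis using linear_functional_expand[OF add smult x] by simp
qed

end

definition jacobiator :: "('a,'m) lr \<Rightarrow> 'm \<Rightarrow> 'm \<Rightarrow> 'm \<Rightarrow> 'm" where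
  "jacobiator L x y z =
     madd L (madd L (lbr L x (lbr L y z)) (lbr L y (lbr L z x))) (lbr L z (lbr L x y))"

lemma lr_alg_jacobiator:
  "lr_alg \<iota> L \<Longrightarrow> x \<in> mcarrier L \<Longrightarrow> y \<in> mcarrier L \<Longrightarrow> z \<in> mcarrier L \<Longrightarrow>
    jacobiator L x y z = mzero L"
  unfolding lr_alg_def jacobiator_def by auto

lemma lr_alg_anchor_bracket:
  "lr_alg \<iota> L \<Longrightarrow> x \<in> mcarrier L \<Longrightarrow> y \<in> mcarrier L \<Longrightarrow>
    anc L (lbr L x y) c = anc L x (anc L y c) - anc L y (anc L x c)"
  unfolding lr_alg_def by auto

locale lr_retract = free_retract L n i p for L :: "('a::comm_ring_1,'m) lr" and n i p +
  fixes \<iota> :: "'r::comm_ring_1 \<Rightarrow> 'a"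
  assumes lr_alg: "lr_alg \<iota> L"
begin

abbreviation "br \<equiv> lbr L"
abbreviation "an \<equiv> anc L"

lemma bracket_closed [intro, simp]: "x \<in> C \<Longrightarrow> y \<in> C \<Longrightarrow> br x y \<in> C"
  and bracket_add_left [simp]: "x \<in> C \<Longrightarrow> y \<in> C \<Longrightarrow> z \<in> C \<Longrightarrow>
    br (madd L x y) z = madd L (br x z) (br y z)"
  and bracket_add_right [simp]: "x \<in> C \<Longrightarrow> y \<in> C \<Longrightarrow> z \<in> C \<Longrightarrow>
    br z (madd L x y) = madd L (br z x) (br z y)"
  and bracket_iota_left: "x \<in> C \<Longrightarrow> y \<in> C \<Longrightarrow> br (msmult L (\<iota> r) x) y = msmult L (\<iota> r) (br x y)"
  and bracket_self: "x \<in> C \<Longrightarrow> br x x = mzero L"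
  and anchor_derivation: "x \<in> C \<Longrightarrow> is_der \<iota> (an x)"
  and anchor_add [simp]: "x \<in> C \<Longrightarrow> y \<in> C \<Longrightarrow> an (madd L x y) b = an x b + an y b"
  and anchor_smult [simp]: "x \<in> C \<Longrightarrow> an (msmult L a x) b = a * an x b"
  and anchor_bracket [simp]: "x \<in> C \<Longrightarrow> y \<in> C \<Longrightarrow> an (br x y) b = an x (an y b) - an y (an x b)"
  and bracket_smult_right [simp]: "x \<in> C \<Longrightarrow> y \<in> C \<Longrightarrow>
    br x (msmult L a y) = madd L (msmult L (an x a) y) (msmult L a (br x y))"
  using lr_alg unfolding lr_alg_def by auto

lemma der_add [simp]: "x \<in> C \<Longrightarrow> an x (u + v) = an x u + an x v"
  and der_mult [simp]: "x \<in> C \<Longrightarrow> an x (u * v) = u * an x v + v * an x u"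
  and der_iota_mult: "x \<in> C \<Longrightarrow> an x (\<iota> r * u) = \<iota> r * an x u"
  using anchor_derivation unfolding is_der_def by blast+

lemma der_zero [simp]: "x \<in> C \<Longrightarrow> an x 0 = 0"
  using der_add[of x 0 0] by simp

lemma der_uminus [simp]: "x \<in> C \<Longrightarrow> an x (- u) = - an x u"
  using der_add[of x u "- u"] by (simp add: eq_neg_iff_add_eq_0 add.commute del: der_add)

lemma der_diff [simp]: "x \<in> C \<Longrightarrow> an x (u - v) = an x u - an x v"
  using der_add[of x u "- v"] by (simp del: der_add)

lemma der_one [simp]: "x \<in> C \<Longrightarrow> an x 1 = 0"
  using der_mult[of x 1 1] by simp

lemma der_iota [simp]: "x \<in> C \<Longrightarrow> an x (\<iota> r) = 0"
  using der_iota_mult[of x r 1] by simp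

lemma anchor_zero [simp]: "an (mzero L) b = 0"
  using anchor_smult[of "mzero L" 0 b] by simp

lemma anchor_sub [simp]: "x \<in> C \<Longrightarrow> y \<in> C \<Longrightarrow> an (msub L x y) b = an x b - an y b"
  by (simp add: msub_def)

lemma coord_bracket_antisym: "x \<in> C \<Longrightarrow> y \<in> C \<Longrightarrow> i (br y x) k = - i (br x y) k"
proof -
  assume xy: "x \<in> C" "y \<in> C"
  have "0 = i (br (madd L x y) (madd L x y)) k" using bracket_self xy by simp
  also have "\<dots> = i (br x y) k + i (br y x) k"
    using xy bracket_self[OF xy(1)] bracket_self[OF xy(2)] by simp
  finally show ?thesis by (metis add_eq_0_iff)
qed

lemma bracket_antisym: "x \<in> C \<Longrightarrow> y \<in> C \<Longrightarrow> br y x = msmult L (-1) (br x y)"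
  by (rule coords_eqI) (auto simp: coord_bracket_antisym[of x y])

lemma bracket_zero_left [simp]: "x \<in> C \<Longrightarrow> br (mzero L) x = mzero L"
  and bracket_zero_right [simp]: "x \<in> C \<Longrightarrow> br x (mzero L) = mzero L"
  using bracket_smult_right[of x "mzero L" 0] bracket_antisym[of x "mzero L"] by simp_all

lemma coord_bracket_smult_left [simp]: "x \<in> C \<Longrightarrow> y \<in> C \<Longrightarrow>
    i (br (msmult L a x) y) k = a * i (br x y) k - an y a * i x k"
  using coord_bracket_antisym[of "msmult L a x" y k] coord_bracket_antisym[of x y k]
  by (simp add: algebra_simps)

lemma bracket_sub_right [simp]: "x \<in> C \<Longrightarrow> y \<in> C \<Longrightarrow> z \<in> C \<Longrightarrow>
    br x (msub L y z) = msub L (br x y) (br x z)"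
  by (rule coords_eqI) (auto simp: msub_def)

lemma jacobi: "x \<in> C \<Longrightarrow> y \<in> C \<Longrightarrow> z \<in> C \<Longrightarrow> jacobiator L x y z = mzero L"
  by (rule lr_alg_jacobiator[OF lr_alg])

lemma bracket_smult_left: "x \<in> C \<Longrightarrow> y \<in> C \<Longrightarrow>
    br (msmult L a x) y = msub L (msmult L a (br x y)) (msmult L (an y a) x)"
  by (rule coords_eqI) (auto simp: msub_def)

end

locale lr_module_retract = L: lr_retract L n i p \<iota> + M: free_retract M m j q
  for L :: "('a::comm_ring_1,'l) lr" and n i p \<iota> and M :: "('a,'m) lr" and m j q +
  fixes act :: "'l \<Rightarrow> 'm \<Rightarrow> 'm"
  assumes lr_module: "lr_module L M act"
begin

lemma act_closed [intro, simp]: "x \<in> L.C \<Longrightarrow> u \<in> M.C \<Longrightarrow> act x u \<in> M.C"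
  and act_add_left [simp]: "x \<in> L.C \<Longrightarrow> y \<in> L.C \<Longrightarrow> u \<in> M.C \<Longrightarrow>
    act (madd L x y) u = madd M (act x u) (act y u)"
  and act_add_right [simp]: "x \<in> L.C \<Longrightarrow> u \<in> M.C \<Longrightarrow> v \<in> M.C \<Longrightarrow>
    act x (madd M u v) = madd M (act x u) (act x v)"
  and act_bracket [simp]: "x \<in> L.C \<Longrightarrow> y \<in> L.C \<Longrightarrow> u \<in> M.C \<Longrightarrow>
    act (lbr L x y) u = msub M (act x (act y u)) (act y (act x u))"
  and act_smult_left [simp]: "x \<in> L.C \<Longrightarrow> u \<in> M.C \<Longrightarrow> act (msmult L a x) u = msmult M a (act x u)"
  and act_smult_right [simp]: "x \<in> L.C \<Longrightarrow> u \<in> M.C \<Longrightarrow>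
    act x (msmult M a u) = madd M (msmult M (anc L x a) u) (msmult M a (act x u))"
  using lr_module unfolding lr_module_def by auto

lemma act_zero_left [simp]: "u \<in> M.C \<Longrightarrow> act (mzero L) u = mzero M"
  using act_smult_left[of "mzero L" u 0] by simp

lemma act_zero_right [simp]: "x \<in> L.C \<Longrightarrow> act x (mzero M) = mzero M"
  using act_smult_right[of x "mzero M" 0] by simp

lemma act_sub_left [simp]: "x \<in> L.C \<Longrightarrow> y \<in> L.C \<Longrightarrow> u \<in> M.C \<Longrightarrow>
    act (msub L x y) u = msub M (act x u) (act y u)"
  by (simp add: msub_def)

lemma act_sub_right [simp]: "x \<in> L.C \<Longrightarrow> u \<in> M.C \<Longrightarrow> v \<in> M.C \<Longrightarrow>
    act x (msub M u v) = msub M (act x u) (act x v)"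
  by (rule M.coords_eqI) (auto simp: msub_def)

abbreviation "S \<equiv> semid L M act"

lemma coact_apply [simp]: "\<zeta> \<in> M.C \<Longrightarrow> coact L M act x \<phi> \<zeta> = anc L x (\<phi> \<zeta>) - \<phi> (act x \<zeta>)"
  and coact_outside [simp]: "\<zeta> \<notin> M.C \<Longrightarrow> coact L M act x \<phi> \<zeta> = 0"
  by (simp_all add: coact_def)

lemma coact_in_dual [intro, simp]: "x \<in> L.C \<Longrightarrow> \<phi> \<in> M.D \<Longrightarrow> coact L M act x \<phi> \<in> M.D"
  unfolding mem_dualmod_iff alin_def by (auto simp: algebra_simps)

lemma semid_simps [simp]:
  "mcarrier S = L.C \<times> M.D"
  "madd S = (\<lambda>(x,\<phi>) (y,\<psi>). (madd L x y, (\<lambda>\<xi>. \<phi> \<xi> + \<psi> \<xi>)))"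
  "mzero S = (mzero L, (\<lambda>\<xi>. 0))"
  "msmult S = (\<lambda>a (x,\<phi>). (msmult L a x, (\<lambda>\<xi>. a * \<phi> \<xi>)))"
  "lbr S = (\<lambda>(x,\<phi>) (y,\<psi>). (lbr L x y, (\<lambda>\<xi>. coact L M act x \<psi> \<xi> - coact L M act y \<phi> \<xi>)))"
  "anc S = (\<lambda>(x,\<phi>) a. anc L x a)"
  by (simp_all add: semid_def)

lemma amodule_semid: "amodule S"
proof -
  have "\<exists>y\<in>mcarrier S. madd S x y = mzero S" if "x \<in> mcarrier S" for x
  proof -
    obtain u \<phi> where x: "x = (u,\<phi>)" "u \<in> L.C" "\<phi> \<in> M.D" using \<open>x \<in> mcarrier S\<close> by auto
    obtain v where "v \<in> L.C" "madd L u v = mzero L" using L.neg_exists x by blast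
    then show ?thesis
      using x dualmod_smult_closed[of \<phi> M "-1"] by (intro bexI[of _ "(v, \<lambda>\<xi>. - \<phi> \<xi>)"]) auto
  qed
  then show ?thesis
    using L.amodule unfolding amodule_def by (auto simp: algebra_simps)
qed

lemma lr_alg_semid: "lr_alg \<iota> S"
  unfolding lr_alg_def
proof (intro conjI)
  show "\<forall>x\<in>mcarrier S. \<forall>y\<in>mcarrier S. lbr S x y \<in> mcarrier S"
    by auto
  show "\<forall>x\<in>mcarrier S. \<forall>y\<in>mcarrier S. \<forall>z\<in>mcarrier S.
      madd S (madd S (lbr S x (lbr S y z)) (lbr S y (lbr S z x))) (lbr S z (lbr S x y)) = mzero S"
    by (auto simp: coact_def fun_eq_iff algebra_simps L.jacobi[unfolded jacobiator_def])
qed (auto simp: amodule_semid coact_def fun_eq_iff algebra_simps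
      L.bracket_iota_left L.bracket_self L.anchor_derivation)

definition dual_coords :: "('m \<Rightarrow> 'a) \<Rightarrow> nat \<Rightarrow> 'a" where
  "dual_coords \<phi> = (\<lambda>k. if k < m then \<phi> (q (unit_vec k)) else 0)"

definition dual_of_coords :: "(nat \<Rightarrow> 'a) \<Rightarrow> 'm \<Rightarrow> 'a" where
  "dual_of_coords v = (\<lambda>\<zeta>. if \<zeta> \<in> M.C then (\<Sum>k<m. v k * j \<zeta> k) else 0)"

text \<open>Coordinates on L \<ltimes> M^*: those of L followed by the values of a form on the
  images of the unit vectors, which determine it.\<close>
definition semid_coords :: "'l \<times> ('m \<Rightarrow> 'a) \<Rightarrow> nat \<Rightarrow> 'a" where
  "semid_coords = (\<lambda>(x,\<phi>). (\<lambda>k. if k < n then i x k else dual_coords \<phi> (k - n)))"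

definition semid_proj :: "(nat \<Rightarrow> 'a) \<Rightarrow> 'l \<times> ('m \<Rightarrow> 'a)" where
  "semid_proj v = (p (\<lambda>k. if k < n then v k else 0), dual_of_coords (\<lambda>k. v (k + n)))"

lemma dual_of_coords_in_dual: "dual_of_coords v \<in> M.D"
  unfolding mem_dualmod_iff alin_def dual_of_coords_def
  by (auto simp: sum.distrib sum_distrib_left algebra_simps)

lemma dual_of_coords_inverse: "\<phi> \<in> M.D \<Longrightarrow> dual_of_coords (dual_coords \<phi>) = \<phi>"
  by (rule M.dual_eqI[OF dual_of_coords_in_dual])
    (simp_all add: M.dual_expand dual_of_coords_def dual_coords_def mult.commute)

lemma alin_semid_proj: "alin (freemod (n + m)) S semid_proj"
  unfolding alin_def semid_proj_def
proof (intro conjI ballI allI)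
  fix v :: "nat \<Rightarrow> 'a"
  show "(p (\<lambda>k. if k < n then v k else 0), dual_of_coords (\<lambda>k. v (k + n))) \<in> mcarrier S"
    using L.proj_closed[OF truncation_in_freemod] dual_of_coords_in_dual by auto
next
  fix v w :: "nat \<Rightarrow> 'a"
  have "p (\<lambda>k. if k < n then v k + w k else 0)
      = madd L (p (\<lambda>k. if k < n then v k else 0)) (p (\<lambda>k. if k < n then w k else 0))"
    using L.proj_add[OF truncation_in_freemod truncation_in_freemod] by (simp add: if_distrib cong: if_cong)
  then show "(p (\<lambda>k. if k < n then madd (freemod (n + m)) v w k else 0),
        dual_of_coords (\<lambda>k. madd (freemod (n + m)) v w (k + n))) =
      madd S (p (\<lambda>k. if k < n then v k else 0), dual_of_coords (\<lambda>k. v (k + n)))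
        (p (\<lambda>k. if k < n then w k else 0), dual_of_coords (\<lambda>k. w (k + n)))"
    by (auto simp: dual_of_coords_def fun_eq_iff sum.distrib algebra_simps cong: if_cong)
next
  fix a and v :: "nat \<Rightarrow> 'a"
  have "p (\<lambda>k. if k < n then a * v k else 0) = msmult L a (p (\<lambda>k. if k < n then v k else 0))"
    using L.proj_smult[OF truncation_in_freemod] by (simp add: if_distrib cong: if_cong)
  then show "(p (\<lambda>k. if k < n then msmult (freemod (n + m)) a v k else 0),
        dual_of_coords (\<lambda>k. msmult (freemod (n + m)) a v (k + n))) =
      msmult S a (p (\<lambda>k. if k < n then v k else 0), dual_of_coords (\<lambda>k. v (k + n)))"
    by (auto simp: dual_of_coords_def fun_eq_iff sum_distrib_left algebra_simps cong: if_cong)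
qed

lemma fgp_semid: "fgp S"
  unfolding fgp_def
proof (intro conjI exI)
  show "amodule S" by (rule amodule_semid)
  show "alin S (freemod (n + m)) semid_coords"
    unfolding alin_def semid_coords_def dual_coords_def by (auto simp: L.coord_vanishes algebra_simps)
  show "alin (freemod (n + m)) S semid_proj" by (rule alin_semid_proj)
  show "\<forall>X\<in>mcarrier S. semid_proj (semid_coords X) = X"
  proof
    fix X assume "X \<in> mcarrier S"
    then obtain x \<phi> where X: "X = (x,\<phi>)" "x \<in> L.C" "\<phi> \<in> M.D" by auto
    have "(\<lambda>k. if k < n then i x k else 0) = i x"
      using L.coord_vanishes[OF X(2)] by (auto simp: fun_eq_iff)
    then show "semid_proj (semid_coords X) = X"
      using X L.p_i dual_of_coords_inverse[OF X(3)]
      by (simp add: semid_proj_def semid_coords_def cong: if_cong)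
  qed
qed

end

text \<open>\<xi>\<cdot>[x,y] - [\<xi>\<cdot>x,y] - [x,\<xi>\<cdot>y] + (x\<cdot>\<xi>)\<cdot>y - (y\<cdot>\<xi>)\<cdot>x, the L'-component of the
  Jacobiator of x, y \<in> L' and \<xi> \<in> L'' in L' \<oplus> L''.\<close>
definition matched_defect ::
  "('a::comm_ring_1,'l1) lr \<Rightarrow> ('l1 \<Rightarrow> 'l2 \<Rightarrow> 'l2) \<Rightarrow> ('l2 \<Rightarrow> 'l1 \<Rightarrow> 'l1) \<Rightarrow> 'l1 \<Rightarrow> 'l1 \<Rightarrow> 'l2 \<Rightarrow> 'l1"
  where
  "matched_defect L1 act12 act21 x y \<xi> =
     msub L1 (madd L1 (msub L1 (madd L1 (act21 \<xi> (lbr L1 x y)) (lbr L1 y (act21 \<xi> x)))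
        (lbr L1 x (act21 \<xi> y))) (act21 (act12 x \<xi>) y)) (act21 (act12 y \<xi>) x)"

definition anchor_defect ::
  "('a::comm_ring_1,'l1) lr \<Rightarrow> ('a,'l2) lr \<Rightarrow> ('l1 \<Rightarrow> 'l2 \<Rightarrow> 'l2) \<Rightarrow> ('l2 \<Rightarrow> 'l1 \<Rightarrow> 'l1) \<Rightarrow>
   'l1 \<Rightarrow> 'l2 \<Rightarrow> 'a \<Rightarrow> 'a" where
  "anchor_defect L1 L2 act12 act21 y \<xi> c =
     anc L1 (act21 \<xi> y) c - anc L2 (act12 y \<xi>) c - anc L2 \<xi> (anc L1 y c) + anc L1 y (anc L2 \<xi> c)"

definition matched_pair ::
  "('a::comm_ring_1,'l1) lr \<Rightarrow> ('a,'l2) lr \<Rightarrow> ('l1 \<Rightarrow> 'l2 \<Rightarrow> 'l2) \<Rightarrow> ('l2 \<Rightarrow> 'l1 \<Rightarrow> 'l1) \<Rightarrow> bool" where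
  "matched_pair L1 L2 act12 act21 \<longleftrightarrow>
     (\<forall>x\<in>mcarrier L1. \<forall>y\<in>mcarrier L1. \<forall>\<xi>\<in>mcarrier L2.
        matched_defect L1 act12 act21 x y \<xi> = mzero L1) \<and>
     (\<forall>\<xi>\<in>mcarrier L2. \<forall>\<eta>\<in>mcarrier L2. \<forall>x\<in>mcarrier L1.
        matched_defect L2 act21 act12 \<xi> \<eta> x = mzero L2) \<and>
     (\<forall>y\<in>mcarrier L1. \<forall>\<xi>\<in>mcarrier L2. \<forall>c. anchor_defect L1 L2 act12 act21 y \<xi> c = 0)"

lemma natpair_apply [simp]: "natpair (\<xi>,\<psi>) (x,\<phi>) = \<phi> \<xi> + \<psi> x"
  by (simp add: natpair_def)

locale twilled_data =
  L12: lr_module_retract L1 n1 i1 p1 \<iota> L2 n2 i2 p2 act12 +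
  L21: lr_module_retract L2 n2 i2 p2 \<iota> L1 n1 i1 p1 act21
  for L1 :: "('a::comm_ring_1,'l1) lr" and n1 i1 p1 and \<iota> :: "'r::comm_ring_1 \<Rightarrow> 'a"
    and L2 :: "('a,'l2) lr" and n2 i2 p2 and act12 act21
begin

abbreviation "C1 \<equiv> mcarrier L1"
abbreviation "C2 \<equiv> mcarrier L2"
abbreviation "D1 \<equiv> mcarrier (dualmod L1)"
abbreviation "D2 \<equiv> mcarrier (dualmod L2)"
abbreviation "br1 \<equiv> lbr L1"
abbreviation "br2 \<equiv> lbr L2"
abbreviation "an1 \<equiv> anc L1"
abbreviation "an2 \<equiv> anc L2"
abbreviation "defect1 \<equiv> matched_defect L1 act12 act21"
abbreviation "defect2 \<equiv> matched_defect L2 act21 act12"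
abbreviation "adefect \<equiv> anchor_defect L1 L2 act12 act21"
abbreviation "T \<equiv> twsum L1 L2 act12 act21"

lemma almost_twilled: "almost_twilled \<iota> L1 L2 act12 act21"
  unfolding almost_twilled_def
  using L12.L.lr_alg L21.L.lr_alg L12.lr_module L21.lr_module by blast

lemma twsum_simps [simp]:
  "mcarrier T = C1 \<times> C2"
  "madd T = (\<lambda>(x,\<xi>) (y,\<eta>). (madd L1 x y, madd L2 \<xi> \<eta>))"
  "mzero T = (mzero L1, mzero L2)"
  "msmult T = (\<lambda>a (x,\<xi>). (msmult L1 a x, msmult L2 a \<xi>))"
  "lbr T = (\<lambda>(x,\<xi>) (y,\<eta>).
        (msub L1 (madd L1 (br1 x y) (act21 \<xi> y)) (act21 \<eta> x),
         msub L2 (madd L2 (br2 \<xi> \<eta>) (act12 x \<eta>)) (act12 y \<xi>)))"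
  "anc T = (\<lambda>(x,\<xi>) a. an1 x a + an2 \<xi> a)"
  by (simp_all add: twsum_def)

lemma amodule_twsum: "amodule T"
proof -
  have "\<exists>v\<in>mcarrier T. madd T u v = mzero T" if "u \<in> mcarrier T" for u
  proof -
    obtain x \<xi> where u: "u = (x,\<xi>)" "x \<in> C1" "\<xi> \<in> C2" using \<open>u \<in> mcarrier T\<close> by auto
    obtain y where "y \<in> C1" "madd L1 x y = mzero L1" using L12.L.neg_exists u by blast
    moreover obtain \<eta> where "\<eta> \<in> C2" "madd L2 \<xi> \<eta> = mzero L2" using L12.M.neg_exists u by blast
    ultimately show ?thesis using u by (intro bexI[of _ "(y, \<eta>)"]) auto
  qed
  then show ?thesis
    using L12.L.amodule L12.M.amodule unfolding amodule_def by (auto simp: algebra_simps)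
qed

lemma coord_jacobiator_twsum_fst:
  assumes "x \<in> C1" "y \<in> C1" "z \<in> C1" "\<xi> \<in> C2" "\<eta> \<in> C2" "\<zeta> \<in> C2"
  shows "i1 (fst (jacobiator T (x,\<xi>) (y,\<eta>) (z,\<zeta>))) k
    = i1 (jacobiator L1 x y z) k
      + i1 (defect1 x y \<zeta>) k + i1 (defect1 z x \<eta>) k + i1 (defect1 y z \<xi>) k"
  using assms
  by (simp add: jacobiator_def matched_defect_def L12.L.coord_bracket_antisym[of _ x] algebra_simps)

lemma coord_jacobiator_twsum_snd:
  assumes "x \<in> C1" "y \<in> C1" "z \<in> C1" "\<xi> \<in> C2" "\<eta> \<in> C2" "\<zeta> \<in> C2"
  shows "i2 (snd (jacobiator T (x,\<xi>) (y,\<eta>) (z,\<zeta>))) k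
    = i2 (jacobiator L2 \<xi> \<eta> \<zeta>) k
      + i2 (defect2 \<xi> \<eta> z) k + i2 (defect2 \<zeta> \<xi> y) k + i2 (defect2 \<eta> \<zeta> x) k"
  using assms
  by (simp add: jacobiator_def matched_defect_def L21.L.coord_bracket_antisym[of _ \<xi>] algebra_simps)

lemma matched_defect_mzero [simp]:
  "x \<in> C1 \<Longrightarrow> y \<in> C1 \<Longrightarrow> defect1 x y (mzero L2) = mzero L1"
  "\<xi> \<in> C2 \<Longrightarrow> \<eta> \<in> C2 \<Longrightarrow> defect2 \<xi> \<eta> (mzero L1) = mzero L2"
  by (simp_all add: matched_defect_def)

lemma anchor_twsum_bracket:
  assumes "x \<in> C1" "y \<in> C1" "\<xi> \<in> C2" "\<eta> \<in> C2"
  shows "anc T (lbr T (x,\<xi>) (y,\<eta>)) c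
    = anc T (x,\<xi>) (anc T (y,\<eta>) c) - anc T (y,\<eta>) (anc T (x,\<xi>) c) + adefect y \<xi> c - adefect x \<eta> c"
  using assms by (simp add: msub_def anchor_defect_def algebra_simps)

lemma matched_defect_closed [intro, simp]:
  "x \<in> C1 \<Longrightarrow> y \<in> C1 \<Longrightarrow> \<xi> \<in> C2 \<Longrightarrow> defect1 x y \<xi> \<in> C1"
  "\<xi> \<in> C2 \<Longrightarrow> \<eta> \<in> C2 \<Longrightarrow> x \<in> C1 \<Longrightarrow> defect2 \<xi> \<eta> x \<in> C2"
  by (simp_all add: matched_defect_def)

lemma anchor_defect_zero_if_lr_alg_twsum:
  assumes lr: "lr_alg \<iota> T" and mem: "y \<in> C1" "\<xi> \<in> C2"
  shows "adefect y \<xi> c = 0"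
proof -
  have "anc T (lbr T (y, mzero L2) (mzero L1, \<xi>)) c
      = anc T (y, mzero L2) (anc T (mzero L1, \<xi>) c) - anc T (mzero L1, \<xi>) (anc T (y, mzero L2) c)"
    by (rule lr_alg_anchor_bracket[OF lr]) (use mem in auto)
  moreover have "anc T (lbr T (y, mzero L2) (mzero L1, \<xi>)) c
      = anc T (y, mzero L2) (anc T (mzero L1, \<xi>) c) - anc T (mzero L1, \<xi>) (anc T (y, mzero L2) c)
        + adefect (mzero L1) (mzero L2) c - adefect y \<xi> c"
    by (rule anchor_twsum_bracket) (use mem in auto)
  moreover have "adefect (mzero L1) (mzero L2) c = 0" by (simp add: anchor_defect_def)
  ultimately show ?thesis by (simp only:) simp
qed

lemma matched_pair_if_lr_alg_twsum:
  assumes lr: "lr_alg \<iota> T"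
  shows "matched_pair L1 L2 act12 act21"
  unfolding matched_pair_def
proof (intro conjI ballI allI)
  fix x y \<xi> assume mem: "x \<in> C1" "y \<in> C1" "\<xi> \<in> C2"
  show "defect1 x y \<xi> = mzero L1"
  proof (rule L12.L.coords_eqI)
    fix k
    have "i1 (defect1 x y \<xi>) k
        = i1 (fst (jacobiator T (x, mzero L2) (y, mzero L2) (mzero L1, \<xi>))) k"
      using mem coord_jacobiator_twsum_fst[of x y "mzero L1" "mzero L2" "mzero L2" \<xi> k]
      by (simp add: L12.L.jacobi)
    also have "\<dots> = 0" using mem by (simp add: lr_alg_jacobiator[OF lr])
    finally show "i1 (defect1 x y \<xi>) k = i1 (mzero L1) k" by simp
  qed (use mem in simp_all)
next
  fix \<xi> \<eta> x assume mem: "\<xi> \<in> C2" "\<eta> \<in> C2" "x \<in> C1"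
  show "defect2 \<xi> \<eta> x = mzero L2"
  proof (rule L12.M.coords_eqI)
    fix k
    have "i2 (defect2 \<xi> \<eta> x) k
        = i2 (snd (jacobiator T (mzero L1, \<xi>) (mzero L1, \<eta>) (x, mzero L2))) k"
      using mem coord_jacobiator_twsum_snd[of "mzero L1" "mzero L1" x \<xi> \<eta> "mzero L2" k]
      by (simp add: L21.L.jacobi)
    also have "\<dots> = 0" using mem by (simp add: lr_alg_jacobiator[OF lr])
    finally show "i2 (defect2 \<xi> \<eta> x) k = i2 (mzero L2) k" by simp
  qed (use mem in simp_all)
next
  fix y \<xi> c assume "y \<in> C1" "\<xi> \<in> C2"
  then show "adefect y \<xi> c = 0" by (rule anchor_defect_zero_if_lr_alg_twsum[OF lr])
qed

lemma matched_pairD: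
  assumes "matched_pair L1 L2 act12 act21"
  shows "x \<in> C1 \<Longrightarrow> y \<in> C1 \<Longrightarrow> \<xi> \<in> C2 \<Longrightarrow> defect1 x y \<xi> = mzero L1"
    and "\<xi> \<in> C2 \<Longrightarrow> \<eta> \<in> C2 \<Longrightarrow> x \<in> C1 \<Longrightarrow> defect2 \<xi> \<eta> x = mzero L2"
    and "y \<in> C1 \<Longrightarrow> \<xi> \<in> C2 \<Longrightarrow> adefect y \<xi> c = 0"
  using assms unfolding matched_pair_def by simp_all

lemma jacobiator_twsum_zero_if_matched_pair:
  assumes mp: "matched_pair L1 L2 act12 act21"
    and "x \<in> C1" "y \<in> C1" "z \<in> C1" "\<xi> \<in> C2" "\<eta> \<in> C2" "\<zeta> \<in> C2"
  shows "jacobiator T (x,\<xi>) (y,\<eta>) (z,\<zeta>) = mzero T"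
proof -
  have closed: "jacobiator T (x,\<xi>) (y,\<eta>) (z,\<zeta>) \<in> mcarrier T"
    using assms(2-) by (simp add: jacobiator_def)
  have "fst (jacobiator T (x,\<xi>) (y,\<eta>) (z,\<zeta>)) = mzero L1"
    by (rule L12.L.coords_eqI)
      (use closed assms(2-) in
        \<open>auto simp: coord_jacobiator_twsum_fst matched_pairD(1)[OF mp] L12.L.jacobi mem_Times_iff\<close>)
  moreover have "snd (jacobiator T (x,\<xi>) (y,\<eta>) (z,\<zeta>)) = mzero L2"
    by (rule L12.M.coords_eqI)
      (use closed assms(2-) in
        \<open>auto simp: coord_jacobiator_twsum_snd matched_pairD(2)[OF mp] L21.L.jacobi mem_Times_iff\<close>)
  ultimately show ?thesis by (simp add: prod_eq_iff)
qed

lemma lr_alg_twsum_if_matched_pair: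
  assumes mp: "matched_pair L1 L2 act12 act21"
  shows "lr_alg \<iota> T"
  unfolding lr_alg_def
proof (intro conjI)
  show "\<forall>u\<in>mcarrier T. \<forall>v\<in>mcarrier T. \<forall>w\<in>mcarrier T.
      madd T (madd T (lbr T u (lbr T v w)) (lbr T v (lbr T w u))) (lbr T w (lbr T u v)) = mzero T"
    using jacobiator_twsum_zero_if_matched_pair[OF mp] unfolding jacobiator_def by fastforce
  show "\<forall>u\<in>mcarrier T. \<forall>v\<in>mcarrier T. \<forall>c.
      anc T (lbr T u v) c = anc T u (anc T v c) - anc T v (anc T u c)"
    using anchor_twsum_bracket matched_pairD(3)[OF mp] by fastforce
qed (auto intro!: L12.L.coords_eqI L12.M.coords_eqI
      simp: amodule_twsum is_der_def algebra_simps L12.L.bracket_self L21.L.bracket_self)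

lemma lr_alg_twsum_iff_matched_pair: "lr_alg \<iota> T \<longleftrightarrow> matched_pair L1 L2 act12 act21"
  using matched_pair_if_lr_alg_twsum lr_alg_twsum_if_matched_pair by blast

lemma coord_matched_defect_smult:
  assumes "x \<in> C1" "y \<in> C1" "\<xi> \<in> C2"
  shows "i1 (defect1 (msmult L1 c x) y \<xi>) k = c * i1 (defect1 x y \<xi>) k + adefect y \<xi> c * i1 x k"
  using assms
  by (simp add: matched_defect_def anchor_defect_def L12.L.bracket_smult_left
      L12.L.coord_bracket_antisym[of y x] algebra_simps)

lemma anchor_defect_add:
  "u \<in> C1 \<Longrightarrow> v \<in> C1 \<Longrightarrow> \<xi> \<in> C2 \<Longrightarrow> adefect (madd L1 u v) \<xi> c = adefect u \<xi> c + adefect v \<xi> c"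
  by (simp add: anchor_defect_def algebra_simps)

lemma anchor_defect_smult:
  "u \<in> C1 \<Longrightarrow> \<xi> \<in> C2 \<Longrightarrow> adefect (msmult L1 a u) \<xi> c = a * adefect u \<xi> c"
  by (simp add: anchor_defect_def algebra_simps)

lemma anchor_defect_zero_if_matched_defect_zero:
  assumes defect: "\<And>x y. x \<in> C1 \<Longrightarrow> y \<in> C1 \<Longrightarrow> defect1 x y \<xi> = mzero L1"
    and "\<xi> \<in> C2" "y \<in> C1"
  shows "adefect y \<xi> c = 0"
proof (rule L12.L.annihilating_functional_zero[where G = "\<lambda>u. adefect u \<xi> c"])
  fix x u assume xu: "x \<in> C1" "u \<in> C1"
  show "msmult L1 (adefect u \<xi> c) x = mzero L1"
  proof (rule L12.L.coords_eqI)
    fix k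
    have "i1 (defect1 (msmult L1 c x) u \<xi>) k = c * i1 (defect1 x u \<xi>) k + adefect u \<xi> c * i1 x k"
      using xu assms(2) by (rule coord_matched_defect_smult)
    then show "i1 (msmult L1 (adefect u \<xi> c) x) k = i1 (mzero L1) k"
      using xu by (simp add: defect)
  qed (use xu in simp_all)
qed (use assms in \<open>simp_all add: anchor_defect_add anchor_defect_smult\<close>)

abbreviation "LL \<equiv> semid L1 L2 act12"
abbreviation "DD \<equiv> semid L2 L1 act21"

definition natpair_form :: "'l2 \<times> ('l1 \<Rightarrow> 'a) \<Rightarrow> 'l1 \<times> ('l2 \<Rightarrow> 'a) \<Rightarrow> 'a" where
  "natpair_form \<alpha> = (\<lambda>z. if z \<in> mcarrier LL then natpair \<alpha> z else 0)"

lemma natpair_form_in_dual: "\<alpha> \<in> mcarrier DD \<Longrightarrow> natpair_form \<alpha> \<in> mcarrier (dualmod LL)"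
  unfolding mem_dualmod_iff alin_def natpair_form_def by (auto simp: algebra_simps)

lemma alin_natpair_form: "alin DD (dualmod LL) natpair_form"
  unfolding alin_def
proof (intro conjI ballI allI)
  fix \<alpha> assume "\<alpha> \<in> mcarrier DD"
  then show "natpair_form \<alpha> \<in> mcarrier (dualmod LL)" by (rule natpair_form_in_dual)
next
  fix \<alpha> \<beta> assume "\<alpha> \<in> mcarrier DD" "\<beta> \<in> mcarrier DD"
  then show "natpair_form (madd DD \<alpha> \<beta>) = madd (dualmod LL) (natpair_form \<alpha>) (natpair_form \<beta>)"
    by (auto simp: natpair_form_def fun_eq_iff algebra_simps)
next
  fix a \<alpha> assume "\<alpha> \<in> mcarrier DD"
  then show "natpair_form (msmult DD a \<alpha>) = msmult (dualmod LL) a (natpair_form \<alpha>)"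
    by (auto simp: natpair_form_def fun_eq_iff algebra_simps)
qed

lemma natpair_injective:
  assumes "\<alpha> \<in> mcarrier DD" "\<beta> \<in> mcarrier DD"
    and eq: "\<And>z. z \<in> mcarrier LL \<Longrightarrow> natpair \<alpha> z = natpair \<beta> z"
  shows "\<alpha> = \<beta>"
proof -
  obtain \<xi> \<psi> \<eta> \<chi> where \<alpha>\<beta>: "\<alpha> = (\<xi>,\<psi>)" "\<beta> = (\<eta>,\<chi>)"
    and mem: "\<xi> \<in> C2" "\<psi> \<in> D1" "\<eta> \<in> C2" "\<chi> \<in> D1"
    using assms(1,2) by auto
  have "\<psi> = \<chi>"
    by (rule L12.L.dual_eqI) (use mem \<alpha>\<beta> eq[of "(_, \<lambda>_. 0)"] in auto)
  moreover have "\<xi> = \<eta>"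
    by (rule L12.M.dual_separates) (use mem \<alpha>\<beta> eq[of "(mzero L1, _)"] \<open>\<psi> = \<chi>\<close> in auto)
  ultimately show ?thesis using \<alpha>\<beta> by simp
qed

lemma natpair_form_surj:
  assumes F: "F \<in> mcarrier (dualmod LL)"
  shows "\<exists>\<alpha>\<in>mcarrier DD. natpair_form \<alpha> = F"
proof -
  have F_add: "F (madd LL u v) = F u + F v" if "u \<in> mcarrier LL" "v \<in> mcarrier LL" for u v
    using F that unfolding mem_dualmod_iff alin_def selfmod_simps by blast
  have F_smult: "F (msmult LL a u) = a * F u" if "u \<in> mcarrier LL" for u a
    using F that unfolding mem_dualmod_iff alin_def selfmod_simps by blast
  define \<psi> where "\<psi> = (\<lambda>x. if x \<in> C1 then F (x, \<lambda>_. 0) else 0)"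
  have \<psi>: "\<psi> \<in> D1"
    unfolding mem_dualmod_iff alin_def
    using F_add[of "(_, \<lambda>_. 0)" "(_, \<lambda>_. 0)"] F_smult[of "(_, \<lambda>_. 0)"] by (auto simp: \<psi>_def)
  have "F (mzero L1, \<lambda>x. \<phi> x + \<chi> x) = F (mzero L1, \<phi>) + F (mzero L1, \<chi>)"
    if "\<phi> \<in> D2" "\<chi> \<in> D2" for \<phi> \<chi>
    using F_add[of "(mzero L1, \<phi>)" "(mzero L1, \<chi>)"] that by simp
  moreover have "F (mzero L1, \<lambda>x. a * \<phi> x) = a * F (mzero L1, \<phi>)" if "\<phi> \<in> D2" for \<phi> a
    using F_smult[of "(mzero L1, \<phi>)" a] that by simp
  ultimately obtain \<xi> where \<xi>: "\<xi> \<in> C2" and eval: "\<And>\<phi>. \<phi> \<in> D2 \<Longrightarrow> F (mzero L1, \<phi>) = \<phi> \<xi>"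
    using L12.M.dual_functional_is_evaluation[of "\<lambda>\<phi>. F (mzero L1, \<phi>)"] by blast
  have "natpair_form (\<xi>, \<psi>) z = F z" for z
  proof (cases "z \<in> mcarrier LL")
    case True
    then obtain x \<phi> where z: "z = (x,\<phi>)" "x \<in> C1" "\<phi> \<in> D2" by auto
    then have "F z = F (x, \<lambda>_. 0) + F (mzero L1, \<phi>)"
      using F_add[of "(x, \<lambda>_. 0)" "(mzero L1, \<phi>)"] by simp
    then show ?thesis using z eval by (simp add: natpair_form_def \<psi>_def)
  next
    case False
    moreover have "F z = 0" using F False unfolding mem_dualmod_iff by blast
    ultimately show ?thesis by (simp add: natpair_form_def)
  qed
  then show ?thesis using \<xi> \<psi> by (intro bexI[of _ "(\<xi>, \<psi>)"]) auto
qed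

lemma bij_betw_natpair_form: "bij_betw natpair_form (mcarrier DD) (mcarrier (dualmod LL))"
  unfolding bij_betw_def
proof
  show "inj_on natpair_form (mcarrier DD)"
  proof (rule inj_onI)
    fix \<alpha> \<beta> assume \<alpha>\<beta>: "\<alpha> \<in> mcarrier DD" "\<beta> \<in> mcarrier DD"
      and eq: "natpair_form \<alpha> = natpair_form \<beta>"
    show "\<alpha> = \<beta>"
    proof (rule natpair_injective[OF \<alpha>\<beta>])
      fix z assume "z \<in> mcarrier LL"
      then show "natpair \<alpha> z = natpair \<beta> z"
        using fun_cong[OF eq, of z] by (simp add: natpair_form_def)
    qed
  qed
  show "natpair_form ` mcarrier DD = mcarrier (dualmod LL)"
    using natpair_form_in_dual natpair_form_surj by blast
qed

definition coad_snd :: "'l1 \<Rightarrow> ('l2 \<Rightarrow> 'a) \<Rightarrow> 'l2 \<Rightarrow> ('l1 \<Rightarrow> 'a) \<Rightarrow> 'l1 \<Rightarrow> 'a" where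
  "coad_snd x \<phi> \<xi> \<psi> =
     (\<lambda>y. if y \<in> C1 then an1 x (\<psi> y) - \<psi> (br1 x y) + an1 y (\<phi> \<xi>) - \<phi> (act12 y \<xi>) else 0)"

lemma coad_snd_apply [simp]:
  "y \<in> C1 \<Longrightarrow> coad_snd x \<phi> \<xi> \<psi> y = an1 x (\<psi> y) - \<psi> (br1 x y) + an1 y (\<phi> \<xi>) - \<phi> (act12 y \<xi>)"
  by (simp add: coad_snd_def)

lemma coad_snd_in_dual [simp]:
  "x \<in> C1 \<Longrightarrow> \<phi> \<in> D2 \<Longrightarrow> \<xi> \<in> C2 \<Longrightarrow> \<psi> \<in> D1 \<Longrightarrow> coad_snd x \<phi> \<xi> \<psi> \<in> D1"
  unfolding mem_dualmod_iff alin_def coad_snd_def by (auto simp: algebra_simps)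

lemma coad_semid:
  assumes "x \<in> C1" "\<phi> \<in> D2" "\<xi> \<in> C2" "\<psi> \<in> D1"
  shows "coad LL DD natpair (x,\<phi>) (\<xi>,\<psi>) = (act12 x \<xi>, coad_snd x \<phi> \<xi> \<psi>)"
  unfolding coad_def
proof (rule the_equality)
  have "\<forall>z\<in>mcarrier LL. natpair (act12 x \<xi>, coad_snd x \<phi> \<xi> \<psi>) z
      = anc LL (x,\<phi>) (natpair (\<xi>,\<psi>) z) - natpair (\<xi>,\<psi>) (lbr LL (x,\<phi>) z)"
    using assms by (auto simp: algebra_simps)
  then show "(act12 x \<xi>, coad_snd x \<phi> \<xi> \<psi>) \<in> mcarrier DD \<and>
      (\<forall>z\<in>mcarrier LL. natpair (act12 x \<xi>, coad_snd x \<phi> \<xi> \<psi>) z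
        = anc LL (x,\<phi>) (natpair (\<xi>,\<psi>) z) - natpair (\<xi>,\<psi>) (lbr LL (x,\<phi>) z))"
    using assms by simp
  then show "\<gamma> = (act12 x \<xi>, coad_snd x \<phi> \<xi> \<psi>)"
    if "\<gamma> \<in> mcarrier DD \<and>
      (\<forall>z\<in>mcarrier LL. natpair \<gamma> z = anc LL (x,\<phi>) (natpair (\<xi>,\<psi>) z) - natpair (\<xi>,\<psi>) (lbr LL (x,\<phi>) z))"
    for \<gamma>
    using that by (intro natpair_injective) auto
qed

lemma dstar_semid:
  assumes "x \<in> C1" "\<phi> \<in> D2" "\<xi> \<in> C2" "\<psi> \<in> D1" "\<eta> \<in> C2" "\<chi> \<in> D1"
  shows "dstar DD natpair (x,\<phi>) (\<xi>,\<psi>) (\<eta>,\<chi>)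
    = an2 \<xi> (\<phi> \<eta>) - an2 \<eta> (\<phi> \<xi>) - \<phi> (br2 \<xi> \<eta>) + \<chi> (act21 \<xi> x) - \<psi> (act21 \<eta> x)"
  using assms by (simp add: dstar_def algebra_simps)

lemma anchor_defect_zero_arg [simp]: "y \<in> C1 \<Longrightarrow> \<xi> \<in> C2 \<Longrightarrow> adefect y \<xi> 0 = 0"
  by (simp add: anchor_defect_def)

lemma dstar_bracket_defect:
  assumes "x \<in> C1" "\<phi> \<in> D2" "y \<in> C1" "\<phi>' \<in> D2" "\<xi> \<in> C2" "\<psi> \<in> D1" "\<eta> \<in> C2" "\<chi> \<in> D1"
  shows "dstar DD natpair (lbr LL (x,\<phi>) (y,\<phi>')) (\<xi>,\<psi>) (\<eta>,\<chi>)
      - (gbr21 LL DD natpair (dstar DD natpair (x,\<phi>)) (y,\<phi>') (\<xi>,\<psi>) (\<eta>,\<chi>)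
         + gbr12 LL DD natpair (x,\<phi>) (dstar DD natpair (y,\<phi>')) (\<xi>,\<psi>) (\<eta>,\<chi>))
    = - \<psi> (defect1 x y \<eta>) + \<chi> (defect1 x y \<xi>)
      + adefect y \<xi> (\<phi> \<eta>) - adefect y \<eta> (\<phi> \<xi>) - \<phi> (defect2 \<xi> \<eta> y)
      - adefect x \<xi> (\<phi>' \<eta>) + adefect x \<eta> (\<phi>' \<xi>) + \<phi>' (defect2 \<xi> \<eta> x)"
  using assms
  by (simp add: gbr21_def gbr12_def coad_semid dstar_semid matched_defect_def anchor_defect_def
      algebra_simps L21.L.bracket_antisym[of "act12 y \<xi>" \<eta>] L21.L.bracket_antisym[of "act12 x \<xi>" \<eta>])

definition dstar_derivation :: "('a,'l) lr \<Rightarrow> ('a,'d) lr \<Rightarrow> ('d \<Rightarrow> 'l \<Rightarrow> 'a) \<Rightarrow> bool" where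
  "dstar_derivation L D pair \<longleftrightarrow>
     (\<forall>x\<in>mcarrier L. \<forall>y\<in>mcarrier L. \<forall>\<alpha>\<in>mcarrier D. \<forall>\<beta>\<in>mcarrier D.
        dstar D pair (lbr L x y) \<alpha> \<beta> =
          gbr21 L D pair (dstar D pair x) y \<alpha> \<beta> + gbr12 L D pair x (dstar D pair y) \<alpha> \<beta>)"

lemma matched_pair_if_dstar_derivation:
  assumes der: "dstar_derivation LL DD natpair"
  shows "matched_pair L1 L2 act12 act21"
proof -
  have vanish: "- \<psi> (defect1 x y \<eta>) + \<chi> (defect1 x y \<xi>)
      + adefect y \<xi> (\<phi> \<eta>) - adefect y \<eta> (\<phi> \<xi>) - \<phi> (defect2 \<xi> \<eta> y)
      - adefect x \<xi> (\<phi>' \<eta>) + adefect x \<eta> (\<phi>' \<xi>) + \<phi>' (defect2 \<xi> \<eta> x) = 0"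
    if mem: "x \<in> C1" "\<phi> \<in> D2" "y \<in> C1" "\<phi>' \<in> D2" "\<xi> \<in> C2" "\<psi> \<in> D1" "\<eta> \<in> C2" "\<chi> \<in> D1"
    for x \<phi> y \<phi>' \<xi> \<psi> \<eta> \<chi>
    using der mem dstar_bracket_defect[OF mem]
    unfolding dstar_derivation_def by (simp add: mem_Times_iff)
  txt \<open>With \<phi> = \<phi>' = \<chi> = 0 only \<psi> (defect1 x y \<eta>) survives; once the anchor condition is
    known, (y,\<phi>), (y,0), (\<xi>,0), (\<eta>,0) isolate \<phi> (defect2 \<xi> \<eta> y).\<close>
  have defect1: "defect1 x y \<eta> = mzero L1" if "x \<in> C1" "y \<in> C1" "\<eta> \<in> C2" for x y \<eta>
    by (rule L12.L.dual_separates)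
      (use that vanish[of x "\<lambda>_. 0" y "\<lambda>_. 0" \<eta> _ \<eta> "\<lambda>_. 0"] in auto)
  have adefect: "adefect y \<xi> c = 0" if "y \<in> C1" "\<xi> \<in> C2" for y \<xi> c
    using anchor_defect_zero_if_matched_defect_zero defect1 that by blast
  have "defect2 \<xi> \<eta> y = mzero L2" if "\<xi> \<in> C2" "\<eta> \<in> C2" "y \<in> C1" for \<xi> \<eta> y
    by (rule L12.M.dual_separates)
      (use that adefect vanish[of y _ y "\<lambda>_. 0" \<xi> "\<lambda>_. 0" \<eta> "\<lambda>_. 0"] in auto)
  then show ?thesis
    unfolding matched_pair_def using defect1 adefect by (intro conjI ballI allI) simp_all
qed

lemma dstar_derivation_if_matched_pair:
  assumes mp: "matched_pair L1 L2 act12 act21"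
  shows "dstar_derivation LL DD natpair"
  unfolding dstar_derivation_def
proof (intro ballI)
  fix X Y \<alpha> \<beta> assume "X \<in> mcarrier LL" "Y \<in> mcarrier LL" "\<alpha> \<in> mcarrier DD" "\<beta> \<in> mcarrier DD"
  then obtain x \<phi> y \<phi>' \<xi> \<psi> \<eta> \<chi> where XY: "X = (x,\<phi>)" "Y = (y,\<phi>')" "\<alpha> = (\<xi>,\<psi>)" "\<beta> = (\<eta>,\<chi>)"
    and mem: "x \<in> C1" "\<phi> \<in> D2" "y \<in> C1" "\<phi>' \<in> D2" "\<xi> \<in> C2" "\<psi> \<in> D1" "\<eta> \<in> C2" "\<chi> \<in> D1"
    by auto
  have "dstar DD natpair (lbr LL X Y) \<alpha> \<beta>
      - (gbr21 LL DD natpair (dstar DD natpair X) Y \<alpha> \<beta> + gbr12 LL DD natpair X (dstar DD natpair Y) \<alpha> \<beta>)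
      = 0"
    unfolding XY dstar_bracket_defect[OF mem] using mem by (simp add: matched_pairD[OF mp])
  then show "dstar DD natpair (lbr LL X Y) \<alpha> \<beta> =
      gbr21 LL DD natpair (dstar DD natpair X) Y \<alpha> \<beta> + gbr12 LL DD natpair X (dstar DD natpair Y) \<alpha> \<beta>"
    by (simp only: right_minus_eq)
qed

lemma twilled_iff_lr_bialgebra: "twilled \<iota> L1 L2 act12 act21 \<longleftrightarrow> lr_bialgebra \<iota> LL DD natpair"
proof -
  have "(\<lambda>\<alpha> z. if z \<in> mcarrier LL then natpair \<alpha> z else 0) = natpair_form"
    by (simp add: natpair_form_def fun_eq_iff)
  then have "lr_bialgebra \<iota> LL DD natpair \<longleftrightarrow> dstar_derivation LL DD natpair"
    unfolding lr_bialgebra_def dstar_derivation_def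
    using L12.lr_alg_semid L21.lr_alg_semid L12.fgp_semid L21.fgp_semid
      alin_natpair_form bij_betw_natpair_form by simp
  moreover have "twilled \<iota> L1 L2 act12 act21 \<longleftrightarrow> lr_alg \<iota> T"
    unfolding twilled_def using almost_twilled by blast
  ultimately show ?thesis
    using lr_alg_twsum_iff_matched_pair matched_pair_if_dstar_derivation dstar_derivation_if_matched_pair
    by blast
qed

end

lemma fgpE:
  assumes "fgp M"
  obtains n i p where "free_retract M n i p"
  using assms unfolding fgp_def free_retract_def by blast

lemma twilled_dataI:
  assumes "free_retract L1 n1 i1 p1" "free_retract L2 n2 i2 p2" "almost_twilled \<iota> L1 L2 act12 act21"
  shows "twilled_data L1 n1 i1 p1 \<iota> L2 n2 i2 p2 act12 act21"
  using assms
  unfolding twilled_data_def lr_module_retract_def lr_module_retract_axioms_def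
    lr_retract_def lr_retract_axioms_def almost_twilled_def
  by blast

theorem corollary4p9:
  fixes \<iota> :: "'r::comm_ring_1 \<Rightarrow> 'a::comm_ring_1"
    and L1 :: "('a,'l1) lr" and L2 :: "('a,'l2) lr"
    and act12 :: "'l1 \<Rightarrow> 'l2 \<Rightarrow> 'l2" and act21 :: "'l2 \<Rightarrow> 'l1 \<Rightarrow> 'l1"
  assumes "(2::'r) dvd 1" and "(3::'r) dvd 1"
    and "alg_map \<iota>"
    and "almost_twilled \<iota> L1 L2 act12 act21"
    and "fgp L1" and "fgp L2"
  shows "twilled \<iota> L1 L2 act12 act21 \<longleftrightarrow>
         lr_bialgebra \<iota> (semid L1 L2 act12) (semid L2 L1 act21) natpair"
proof -
  obtain n1 i1 p1 where "free_retract L1 n1 i1 p1" using \<open>fgp L1\<close> by (rule fgpE)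
  moreover obtain n2 i2 p2 where "free_retract L2 n2 i2 p2" using \<open>fgp L2\<close> by (rule fgpE)
  ultimately interpret twilled_data L1 n1 i1 p1 \<iota> L2 n2 i2 p2 act12 act21
    using \<open>almost_twilled \<iota> L1 L2 act12 act21\<close> by (rule twilled_dataI)
  show ?thesis by (rule twilled_iff_lr_bialgebra)
qed

end
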